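(* Let $m,n,M$ be positive integers, let $c(0)>0$ be real, and define $c(k)=c(k-1)/2^{\frac{m+n}{m}}$ for $k\ge1$, $\hat c(0)=\lceil 2^Mc(0)\rceil/2^M$ and $\hat c(k)=\lceil 2^M\hat c(k-1)2^{-\frac{m+n}{m}}\rceil/2^M$ for $k\ge1$. Then for each integer $k\ge0$, $$c(k)\le\hat c(k)<c(k)+\frac1{2^M}\sum_{i=0}^k2^{-\frac{i(m+n)}{m}}<c(k)+\frac2{2^M}.$$ *)

theory Defs
  imports Complex_Main
begin

fun cseq :: "nat \<Rightarrow> nat \<Rightarrow> real \<Rightarrow> nat \<Rightarrow> real" where
  "cseq m n c0 0 = c0"
| "cseq m n c0 (Suc k) = cseq m n c0 k / 2 powr ((real m + real n) / real m)"

fun chat :: "nat \<Rightarrow> nat \<Rightarrow> nat \<Rightarrow> real \<Rightarrow> nat \<Rightarrow> real" where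
  "chat m n M c0 0 = real_of_int \<lceil>2 ^ M * c0\<rceil> / 2 ^ M"
| "chat m n M c0 (Suc k) =
     real_of_int \<lceil>2 ^ M * chat m n M c0 k * 2 powr (- ((real m + real n) / real m))\<rceil> / 2 ^ M"

end

theory Submission
  imports Defs
begin

text \<open>Both sequences are scaled by the same factor \<open>r = 2 powr (-(m+n)/m) \<le> 1/2\<close> at each
  step; rounding up to the grid \<open>2^-M\<close> adds an error in \<open>[0, 2^-M)\<close>, and errors already made
  are shrunk by \<open>r\<close>. So after \<open>k\<close> steps the error lies in \<open>[0, 2^-M \<Sum>i\<le>k. r^i)\<close>, and the
  geometric sum is below \<open>2\<close>.\<close>

lemma ceiling_grid_bounds:
  fixes x :: real
  shows "x \<le> real_of_int \<lceil>2 ^ M * x\<rceil> / 2 ^ M"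
    and "real_of_int \<lceil>2 ^ M * x\<rceil> / 2 ^ M < x + 1 / 2 ^ M"
proof -
  have "2 ^ M * x \<le> real_of_int \<lceil>2 ^ M * x\<rceil>" "real_of_int \<lceil>2 ^ M * x\<rceil> < 2 ^ M * x + 1"
    by linarith+
  then show "x \<le> real_of_int \<lceil>2 ^ M * x\<rceil> / 2 ^ M"
    and "real_of_int \<lceil>2 ^ M * x\<rceil> / 2 ^ M < x + 1 / 2 ^ M"
    by (simp_all add: field_simps)
qed

lemma rounding_error_geometric_bound:
  fixes a b :: "nat \<Rightarrow> real" and r e :: real
  assumes "r \<ge> 0"
    and "a 0 \<le> b 0" "b 0 < a 0 + e"
    and "\<And>k. a (Suc k) = a k * r"
    and "\<And>k. b k * r \<le> b (Suc k)" "\<And>k. b (Suc k) < b k * r + e"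
  shows "a k \<le> b k \<and> b k < a k + e * (\<Sum>i=0..k. r ^ i)"
proof (induction k)
  case 0
  then show ?case using assms(2,3) by simp
next
  case (Suc k)
  have "(b k - a k) * r \<le> e * (\<Sum>i=0..k. r ^ i) * r"
    using Suc \<open>r \<ge> 0\<close> by (intro mult_right_mono) simp_all
  moreover have "(\<Sum>i=0..Suc k. r ^ i) = 1 + r * (\<Sum>i=0..k. r ^ i)"
    by (subst sum.atLeast0_atMost_Suc_shift) (simp add: sum_distrib_left del: sum.atLeast0_atMost_Suc)
  moreover have "0 \<le> (b k - a k) * r"
    using Suc \<open>r \<ge> 0\<close> by simp
  ultimately show ?case
    using assms(4-6)[of k] by (simp add: algebra_simps)
qed

lemma geometric_sum_less_2:
  fixes r :: real
  assumes "0 \<le> r" "r \<le> 1/2"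
  shows "(\<Sum>i=0..k. r ^ i) < 2"
proof -
  have "(\<Sum>i=0..k. r ^ i) \<le> (\<Sum>i=0..k. (1/2::real) ^ i)"
    using assms by (intro sum_mono power_mono) simp_all
  also have "(\<Sum>i=0..k. (1/2::real) ^ i) = 2 - (1/2) ^ k"
    by (induction k) (simp_all add: field_simps)
  also have "\<dots> < 2" by simp
  finally show ?thesis .
qed

lemma powr_minus_of_nat_mult:
  fixes b x :: real
  assumes "b > 0"
  shows "b powr (- (real i * x)) = (b powr (- x)) ^ i"
  using assms by (simp add: powr_realpow [symmetric] powr_powr mult.commute)

lemma scaling_factor_le_half:
  assumes "m > 0"
  shows "2 powr (- ((real m + real n) / real m)) \<le> 1/2"
proof -
  have "(2::real) powr 1 \<le> 2 powr ((real m + real n) / real m)"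
    using assms by (intro powr_mono) simp_all
  then show ?thesis by (simp add: powr_minus divide_simps)
qed

theorem lemma5:
  fixes m n M k :: nat and c0 :: real
  assumes "m > 0" "n > 0" "M > 0" "c0 > 0"
  shows "cseq m n c0 k \<le> chat m n M c0 k
    \<and> chat m n M c0 k < cseq m n c0 k + 1 / 2 ^ M *
          (\<Sum>i=0..k. 2 powr (- (real i * (real m + real n) / real m)))
    \<and> cseq m n c0 k + 1 / 2 ^ M *
          (\<Sum>i=0..k. 2 powr (- (real i * (real m + real n) / real m)))
       < cseq m n c0 k + 2 / 2 ^ M"
proof -
  define r where "r = (2::real) powr (- ((real m + real n) / real m))"
  have "r \<ge> 0" by (simp add: r_def)
  have sum_eq: "(\<Sum>i=0..k. 2 powr (- (real i * (real m + real n) / real m))) = (\<Sum>i=0..k. r ^ i)"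
    using powr_minus_of_nat_mult[of 2 _ "(real m + real n) / real m"] by (simp add: r_def)
  have cseq_Suc: "cseq m n c0 (Suc j) = cseq m n c0 j * r" for j
    by (simp add: r_def powr_minus_divide)
  have chat_Suc: "chat m n M c0 (Suc j) = real_of_int \<lceil>2 ^ M * (chat m n M c0 j * r)\<rceil> / 2 ^ M"
    for j by (simp add: r_def mult.assoc)
  have "cseq m n c0 k \<le> chat m n M c0 k
      \<and> chat m n M c0 k < cseq m n c0 k + 1 / 2 ^ M * (\<Sum>i=0..k. r ^ i)"
    using \<open>r \<ge> 0\<close> ceiling_grid_bounds
    by (intro rounding_error_geometric_bound)
       (simp_all only: chat_Suc cseq_Suc chat.simps(1) cseq.simps(1))
  moreover have "(\<Sum>i=0..k. r ^ i) < 2"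
    using geometric_sum_less_2 \<open>r \<ge> 0\<close> scaling_factor_le_half[OF \<open>m > 0\<close>] by (simp add: r_def)
  ultimately show ?thesis
    unfolding sum_eq by (simp add: divide_strict_right_mono)
qed

end
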